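(* Let $n\ge 2$, $N=\{1,\dots,n\}$, for each $i\in N$ let $A_i$ be a nonempty finite set, $A=\prod_{i\in N}A_i$, $u_i:A\to\mathbb{R}$, $u(a)=(u_i(a))_{i\in N}$. Let $V=\operatorname{co}\{u(a):a\in A\}$ and $F^*=\prod_{i\in N}\left[\min_{a\in A}u_i(a),\ \max_{a\in A}u_i(a)\right]$. (1) If $V\neq F^*$, then for all $\delta,\delta'\in(0,1]$ and $T,T'\in\mathbb{N}$ with $\delta^T<(\delta')^{T'}$, we have $F(\delta',T')\subsetneq F(\delta,T)$. (2) If $V=F^*$, then $F(\delta,T)=V$ for all $\delta\in(0,1]$ and $T\in\mathbb{N}$.
   Context: $\operatorname{co}$ denotes convex hull. For $\delta\in(0,1]$, $T\in\mathbb{N}$ and $a^{[nT]}=(a^1,\dots,a^{nT})\in A^{nT}$, extend indices by $a^s=a^{s-nT}$ for $s\ge nT+1$, set $U_i(a^{[nT]})=\frac{1}{\sum_{k=1}^{nT}\delta^{k-1}}\sum_{k=1}^{nT}\delta^{k-1}u_i(a^{(i-1)T+k})$, $U=(U_i)_{i\in N}$, and $F(\delta,T)=\operatorname{co}\left(\bigcup_{a^{[nT]}\in A^{nT}}\{U(a^{[nT]})\}\right)$. (The paper writes $F(\Delta)$ for $F(\delta,T)$ with $\Delta=\delta^T$.) *)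

theory Defs
  imports "HOL-Analysis.Analysis"
begin

text \<open>Players form the finite type 'n; pos :: 'n => nat is the bijection onto {1..n}
  giving the numbering of players (player i has number pos i).\<close>

definition profiles :: "('n \<Rightarrow> 'a set) \<Rightarrow> ('n \<Rightarrow> 'a) set" where
  "profiles Act = Pi UNIV Act"

definition uvec :: "('n::finite \<Rightarrow> ('n \<Rightarrow> 'a) \<Rightarrow> real) \<Rightarrow> ('n \<Rightarrow> 'a) \<Rightarrow> real ^ 'n" where
  "uvec u a = (\<chi> i. u i a)"

text \<open>Periodic extension of indices 1..m: a^s = a^(s-m) for s >= m+1.\<close>
definition per_idx :: "nat \<Rightarrow> nat \<Rightarrow> nat" where
  "per_idx m s = (s - 1) mod m + 1"

definition Upay :: "('n::finite \<Rightarrow> nat) \<Rightarrow> ('n \<Rightarrow> ('n \<Rightarrow> 'a) \<Rightarrow> real) \<Rightarrow> real \<Rightarrow> nat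
    \<Rightarrow> (nat \<Rightarrow> ('n \<Rightarrow> 'a)) \<Rightarrow> real ^ 'n" where
  "Upay pos u \<delta> T s = (\<chi> i.
     (1 / (\<Sum>k=1..CARD('n)*T. \<delta> ^ (k - 1))) *
     (\<Sum>k=1..CARD('n)*T. \<delta> ^ (k - 1) * u i (s (per_idx (CARD('n)*T) ((pos i - 1) * T + k)))))"

definition Fset :: "('n::finite \<Rightarrow> nat) \<Rightarrow> ('n \<Rightarrow> 'a set) \<Rightarrow> ('n \<Rightarrow> ('n \<Rightarrow> 'a) \<Rightarrow> real)
    \<Rightarrow> real \<Rightarrow> nat \<Rightarrow> (real ^ 'n) set" where
  "Fset pos Act u \<delta> T = convex hull
     {Upay pos u \<delta> T s | s. \<forall>k\<in>{1..CARD('n)*T}. s k \<in> profiles Act}"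

definition Vset :: "('n::finite \<Rightarrow> 'a set) \<Rightarrow> ('n \<Rightarrow> ('n \<Rightarrow> 'a) \<Rightarrow> real) \<Rightarrow> (real ^ 'n) set" where
  "Vset Act u = convex hull (uvec u ` profiles Act)"

definition Fstar :: "('n::finite \<Rightarrow> 'a set) \<Rightarrow> ('n \<Rightarrow> ('n \<Rightarrow> 'a) \<Rightarrow> real) \<Rightarrow> (real ^ 'n) set" where
  "Fstar Act u = {x. \<forall>i. Min (u i ` profiles Act) \<le> x $ i \<and> x $ i \<le> Max (u i ` profiles Act)}"

end

theory Submission
  imports Defs
begin

(*
  Cut the n T periods into n blocks of length T and put D = delta^T. In block b player i
  carries the weight D^((b - slot i) mod n), so the support function of F(delta, T) in a
  direction p is obtained by playing in every block a profile maximising the p-weighted block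
  value; it depends on delta and T only through D.

  For D < D' <= 1 the cyclic weight vector (D'^k) is a nonnegative combination of the cyclic
  shifts of (D^k). Hence the support function is antitone in D, and by separation
  F(delta', T') is contained in F(delta, T) whenever delta^T < delta'^T'.

  If V differs from F*, some sign pattern admits no profile that is extremal in every
  coordinate at once. Connectedness of the corresponding open orthant of directions then
  yields a p in it (so all p_i are nonzero) with two maximisers over u(A) having different
  payoff vectors. Equal support functions at p would force one profile to maximise every
  block value at once; since the circulant matrix (D^((c - j) mod n)) is invertible for D < 1,
  both maximisers would then have the same payoff vector. If V = F*, the chain
  V <= F(delta, T) <= F* collapses.
*)

section \<open>Cyclic differences\<close>

definition cyc_diff :: "nat \<Rightarrow> nat \<Rightarrow> nat \<Rightarrow> nat" where
  "cyc_diff n a b = nat ((int a - int b) mod int n)"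

lemma of_nat_cyc_diff: "n > 0 \<Longrightarrow> int (cyc_diff n a b) = (int a - int b) mod int n"
  unfolding cyc_diff_def by simp

lemma cyc_diff_eq_cyc_diff_iff:
  "n > 0 \<Longrightarrow> cyc_diff n a b = cyc_diff n c d \<longleftrightarrow> (int a - int b) mod int n = (int c - int d) mod int n"
  by (metis of_nat_cyc_diff of_nat_eq_iff)

lemma cyc_diff_less: "n > 0 \<Longrightarrow> cyc_diff n a b < n"
  unfolding cyc_diff_def by (simp add: nat_less_iff)

lemma cyc_diff_0_right: "a < n \<Longrightarrow> cyc_diff n a 0 = a"
  unfolding cyc_diff_def by simp

lemma cyc_diff_1_right: "n > 0 \<Longrightarrow> a < n \<Longrightarrow> cyc_diff n a 1 = (if a = 0 then n - 1 else a - 1)"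
  unfolding cyc_diff_def by (auto simp: of_nat_diff zmod_minus1)

lemma cyc_diff_right_commute: "n > 0 \<Longrightarrow> cyc_diff n (cyc_diff n a b) c = cyc_diff n (cyc_diff n a c) b"
  by (simp add: cyc_diff_eq_cyc_diff_iff of_nat_cyc_diff mod_diff_left_eq algebra_simps)

lemma cyc_diff_cancel_1: "n > 0 \<Longrightarrow> cyc_diff n (cyc_diff n a 1) (cyc_diff n b 1) = cyc_diff n a b"
  by (simp add: cyc_diff_eq_cyc_diff_iff of_nat_cyc_diff mod_diff_left_eq mod_diff_right_eq)

lemma cyc_diff_0_left_involutive: "c < n \<Longrightarrow> cyc_diff n 0 (cyc_diff n 0 c) = c"
  using cyc_diff_eq_cyc_diff_iff[of n 0 "cyc_diff n 0 c" c 0]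
  by (simp add: of_nat_cyc_diff mod_diff_right_eq mod_minus_eq cyc_diff_0_right)

lemma cyc_diff_eq_0_iff:
  assumes "a < n" "b < n"
  shows "cyc_diff n a b = 0 \<longleftrightarrow> a = b"
proof -
  have "cyc_diff n a b = 0 \<longleftrightarrow> int n dvd (int a - int b)"
    unfolding cyc_diff_def using assms by (simp add: nat_eq_iff mod_eq_0_iff_dvd)
  also have "\<dots> \<longleftrightarrow> a = b"
  proof
    assume "int n dvd (int a - int b)"
    moreover have "\<bar>int a - int b\<bar> < int n" using assms by linarith
    ultimately have "int a - int b = 0" by (meson dvd_abs_iff zdvd_not_zless zero_less_abs_iff)
    then show "a = b" by simp
  qed simp
  finally show ?thesis .
qed

lemma bij_betw_cyc_diff: "n > 0 \<Longrightarrow> bij_betw (\<lambda>a. cyc_diff n a b) {..<n} {..<n}"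
  by (rule bij_betw_byWitness[where f' = "\<lambda>c. nat ((int c + int b) mod int n)"])
    (auto simp: of_nat_cyc_diff cyc_diff_less nat_less_iff mod_add_left_eq cyc_diff_def mod_diff_left_eq)

lemma sum_cyc_diff_reindex: "n > 0 \<Longrightarrow> (\<Sum>a<n. g (cyc_diff n a b)) = (\<Sum>a<n. g a)"
  using sum.reindex_bij_betw[OF bij_betw_cyc_diff] .

lemma sum_cyc_diff_convolution:
  fixes w f :: "nat \<Rightarrow> 'a::comm_semiring_1"
  assumes "n > 0"
  shows "(\<Sum>b<n. \<Sum>k<n. w k * f (cyc_diff n b k)) = (\<Sum>k<n. w k) * (\<Sum>b<n. f b)"
proof -
  have "(\<Sum>b<n. \<Sum>k<n. w k * f (cyc_diff n b k)) = (\<Sum>k<n. \<Sum>b<n. w k * f (cyc_diff n b k))"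
    by (rule sum.swap)
  also have "\<dots> = (\<Sum>k<n. w k * (\<Sum>b<n. f (cyc_diff n b k)))"
    by (simp only: sum_distrib_left)
  also have "\<dots> = (\<Sum>k<n. w k * (\<Sum>b<n. f b))"
    by (simp only: sum_cyc_diff_reindex[OF assms])
  also have "\<dots> = (\<Sum>k<n. w k) * (\<Sum>b<n. f b)"
    by (rule sum_distrib_right[symmetric])
  finally show ?thesis .
qed

section \<open>Circulant weights\<close>

definition circ_weight :: "nat \<Rightarrow> 'a::comm_ring_1 \<Rightarrow> 'a \<Rightarrow> nat \<Rightarrow> 'a" where
  "circ_weight n D D' k = D' ^ k - D * D' ^ cyc_diff n k 1"

lemma power_cyc_diff_recurrence:
  fixes D :: "'a::comm_ring_1"
  assumes n: "n > 0" and c: "c < n" and j: "j < n"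
  shows "D ^ cyc_diff n c j - D * D ^ cyc_diff n (cyc_diff n c 1) j = (if c = j then 1 - D ^ n else 0)"
proof -
  let ?m = "cyc_diff n c j"
  have "cyc_diff n (cyc_diff n c 1) j = cyc_diff n ?m 1"
    by (rule cyc_diff_right_commute[OF n])
  also have "\<dots> = (if c = j then n - 1 else ?m - 1)"
    using cyc_diff_1_right[OF n cyc_diff_less[OF n]] cyc_diff_eq_0_iff[OF c j] by simp
  finally have shift: "cyc_diff n (cyc_diff n c 1) j = (if c = j then n - 1 else ?m - 1)" .
  show ?thesis
  proof (cases "c = j")
    case True
    then show ?thesis using shift n power_Suc[of D "n - 1"] cyc_diff_eq_0_iff[OF c j] by simp
  next
    case False
    then have "?m > 0" using cyc_diff_eq_0_iff[OF c j] by simp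
    then show ?thesis using False shift power_Suc[of D "?m - 1"] by simp
  qed
qed

lemma circ_weight_convolution:
  fixes D D' :: "'a::comm_ring_1"
  assumes n: "n > 0" and d: "d < n"
  shows "(\<Sum>k<n. circ_weight n D D' k * D ^ cyc_diff n d k) = (1 - D ^ n) * D' ^ d"
proof -
  have "(\<Sum>k<n. D' ^ cyc_diff n k 1 * D ^ cyc_diff n d k)
      = (\<Sum>k<n. D' ^ cyc_diff n k 1 * D ^ cyc_diff n (cyc_diff n d 1) (cyc_diff n k 1))"
    by (intro sum.cong refl) (simp only: cyc_diff_cancel_1[OF n])
  also have "\<dots> = (\<Sum>k<n. D' ^ k * D ^ cyc_diff n (cyc_diff n d 1) k)"
    by (rule sum_cyc_diff_reindex[OF n])
  finally have shifted: "(\<Sum>k<n. D' ^ cyc_diff n k 1 * D ^ cyc_diff n d k)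
      = (\<Sum>k<n. D' ^ k * D ^ cyc_diff n (cyc_diff n d 1) k)" .
  have "(\<Sum>k<n. circ_weight n D D' k * D ^ cyc_diff n d k)
      = (\<Sum>k<n. D' ^ k * D ^ cyc_diff n d k) - D * (\<Sum>k<n. D' ^ cyc_diff n k 1 * D ^ cyc_diff n d k)"
    by (simp only: circ_weight_def left_diff_distrib sum_subtractf sum_distrib_left mult.assoc)
  also have "\<dots> = (\<Sum>k<n. D' ^ k * (D ^ cyc_diff n d k - D * D ^ cyc_diff n (cyc_diff n d 1) k))"
    by (simp only: shifted right_diff_distrib sum_subtractf sum_distrib_left mult.left_commute)
  also have "\<dots> = (\<Sum>k<n. if k = d then D' ^ k * (1 - D ^ n) else 0)"
  proof (rule sum.cong[OF refl])
    fix k assume "k \<in> {..<n}"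
    then show "D' ^ k * (D ^ cyc_diff n d k - D * D ^ cyc_diff n (cyc_diff n d 1) k)
        = (if k = d then D' ^ k * (1 - D ^ n) else 0)"
      by (subst power_cyc_diff_recurrence[OF n d]) auto
  qed
  also have "\<dots> = (1 - D ^ n) * D' ^ d"
    using d by (simp add: mult.commute)
  finally show ?thesis .
qed

lemma sum_circ_weight:
  fixes D D' :: "'a::comm_ring_1"
  assumes "n > 0"
  shows "(\<Sum>k<n. circ_weight n D D' k) = (1 - D) * (\<Sum>k<n. D' ^ k)"
proof -
  have "(\<Sum>k<n. circ_weight n D D' k) = (\<Sum>k<n. D' ^ k) - D * (\<Sum>k<n. D' ^ cyc_diff n k 1)"
    by (simp only: circ_weight_def sum_subtractf sum_distrib_left)
  also have "\<dots> = (1 - D) * (\<Sum>k<n. D' ^ k)"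
    by (simp only: sum_cyc_diff_reindex[OF assms]) (simp add: algebra_simps)
  finally show ?thesis .
qed

lemma circ_weight_pos:
  fixes D D' :: "'a::linordered_idom"
  assumes D: "0 < D" "D < D'" "D' \<le> 1" and k: "k < n"
  shows "circ_weight n D D' k > 0"
proof (cases "k = 0")
  case True
  have "D' ^ (n - 1) \<le> 1" using D by (simp add: power_le_one)
  then have "D * D' ^ (n - 1) \<le> D * 1" using D by (intro mult_left_mono) auto
  then have "D * D' ^ (n - 1) < 1" using D by linarith
  then show ?thesis using True k cyc_diff_1_right[of n 0] by (simp add: circ_weight_def)
next
  case False
  have "D' ^ k = D' * D' ^ (k - 1)" using False power_Suc[of D' "k - 1"] by simp
  then have "circ_weight n D D' k = (D' - D) * D' ^ (k - 1)"
    using False k cyc_diff_1_right[of n k] by (simp add: circ_weight_def algebra_simps)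
  also have "\<dots> > 0" using D by simp
  finally show ?thesis .
qed

lemma circulant_kernel_trivial:
  fixes z :: "'i \<Rightarrow> 'a::idom" and idx :: "'i \<Rightarrow> nat"
  assumes I: "finite I" and idx: "inj_on idx I" "\<And>i. i \<in> I \<Longrightarrow> idx i < n"
    and D: "D ^ n \<noteq> 1"
    and kernel: "\<And>c. c < n \<Longrightarrow> (\<Sum>i\<in>I. z i * D ^ cyc_diff n c (idx i)) = 0"
    and i0: "i0 \<in> I"
  shows "z i0 = 0"
proof -
  define c where "c = idx i0"
  have c: "c < n" and n: "n > 0" using idx(2)[OF i0] unfolding c_def by auto
  have idx_eq_c: "c = idx i \<longleftrightarrow> i = i0" if "i \<in> I" for i
    using inj_onD[OF idx(1) _ that i0] unfolding c_def by auto
  have "0 = (\<Sum>i\<in>I. z i * D ^ cyc_diff n c (idx i)) - D * (\<Sum>i\<in>I. z i * D ^ cyc_diff n (cyc_diff n c 1) (idx i))"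
    using kernel c cyc_diff_less[OF n] by simp
  also have "\<dots> = (\<Sum>i\<in>I. z i * (D ^ cyc_diff n c (idx i) - D * D ^ cyc_diff n (cyc_diff n c 1) (idx i)))"
    by (simp add: right_diff_distrib sum_subtractf sum_distrib_left mult.left_commute)
  also have "\<dots> = (\<Sum>i\<in>I. if i = i0 then z i * (1 - D ^ n) else 0)"
  proof (rule sum.cong[OF refl])
    fix i assume i: "i \<in> I"
    show "z i * (D ^ cyc_diff n c (idx i) - D * D ^ cyc_diff n (cyc_diff n c 1) (idx i))
        = (if i = i0 then z i * (1 - D ^ n) else 0)"
      by (subst power_cyc_diff_recurrence[OF n c idx(2)[OF i]]) (use idx_eq_c[OF i] in simp)
  qed
  also have "\<dots> = z i0 * (1 - D ^ n)" using I i0 by simp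
  finally show ?thesis using D by simp
qed

section \<open>Periodic discounted sums\<close>

lemma sum_per_idx_shift:
  assumes m: "m > 0" and a: "a < m"
  shows "(\<Sum>k=1..m. F (k - 1) (per_idx m (a + k))) = (\<Sum>z<m. F (cyc_diff m z a) (z + 1))"
proof -
  have diff: "cyc_diff m ((a + k - 1) mod m) a = k - 1" if "k \<in> {1..m}" for k
  proof -
    have "int (cyc_diff m ((a + k - 1) mod m) a) = int (k - 1)"
      using that m by (simp add: of_nat_cyc_diff zmod_int of_nat_diff mod_diff_left_eq)
    then show ?thesis by (simp only: of_nat_eq_iff)
  qed
  have bij: "bij_betw (\<lambda>k. (a + k - 1) mod m) {1..m} {..<m}"
  proof (rule bij_betw_byWitness[where f' = "\<lambda>z. cyc_diff m z a + 1"])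
    show "\<forall>k\<in>{1..m}. cyc_diff m ((a + k - 1) mod m) a + 1 = k" using diff by simp
    show "\<forall>z\<in>{..<m}. (a + (cyc_diff m z a + 1) - 1) mod m = z"
    proof
      fix z assume "z \<in> {..<m}"
      then have "int ((a + (cyc_diff m z a + 1) - 1) mod m) = int z"
        using m by (simp add: of_nat_cyc_diff zmod_int mod_add_right_eq)
      then show "(a + (cyc_diff m z a + 1) - 1) mod m = z" by (simp only: of_nat_eq_iff)
    qed
    show "(\<lambda>k. (a + k - 1) mod m) ` {1..m} \<subseteq> {..<m}" using m by auto
    show "(\<lambda>z. cyc_diff m z a + 1) ` {..<m} \<subseteq> {1..m}"
      using cyc_diff_less[OF m] by (auto simp: Suc_leI)
  qed
  have "(\<Sum>z<m. F (cyc_diff m z a) (z + 1))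
      = (\<Sum>k=1..m. F (cyc_diff m ((a + k - 1) mod m) a) ((a + k - 1) mod m + 1))"
    using sum.reindex_bij_betw[OF bij, of "\<lambda>z. F (cyc_diff m z a) (z + 1)"] by simp
  also have "\<dots> = (\<Sum>k=1..m. F (k - 1) (per_idx m (a + k)))"
    using diff by (intro sum.cong refl) (simp add: per_idx_def)
  finally show ?thesis by simp
qed

lemma sum_lessThan_mult_blocks:
  fixes F :: "nat \<Rightarrow> 'a::comm_monoid_add"
  shows "(\<Sum>z<n * T. F z) = (\<Sum>b<n. \<Sum>r<T. F (b * T + r))"
proof -
  have "(\<Sum>z<n * T. F z) = (\<Sum>b<n. sum F {b * T..<b * T + T})"
    by (rule sum.nat_group[symmetric])
  also have "\<dots> = (\<Sum>b<n. \<Sum>r<T. F (b * T + r))"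
  proof (rule sum.cong[OF refl])
    fix b
    have "sum F {0 + b * T..<T + b * T} = (\<Sum>r\<in>{0..<T}. F (r + b * T))"
      by (rule sum.shift_bounds_nat_ivl)
    then show "sum F {b * T..<b * T + T} = (\<Sum>r<T. F (b * T + r))"
      by (simp add: add.commute atLeast0LessThan)
  qed
  finally show ?thesis .
qed

lemma cyc_diff_mult_add:
  assumes "n > 0" "T > 0" "r < T"
  shows "cyc_diff (n * T) (b * T + r) (j * T) = cyc_diff n b j * T + r"
proof -
  have "int (cyc_diff (n * T) (b * T + r) (j * T)) = ((int b - int j) * int T + int r) mod (int T * int n)"
    using assms by (simp add: of_nat_cyc_diff algebra_simps)
  also have "\<dots> = int T * ((int b - int j) mod int n) + int r"
    using assms by (simp add: mod_mult2_eq')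
  also have "\<dots> = int (cyc_diff n b j * T + r)"
    using assms by (simp add: of_nat_cyc_diff)
  finally show ?thesis by (simp only: of_nat_eq_iff)
qed

lemma sum_per_idx_discounted:
  fixes \<delta> :: "'a::comm_semiring_1"
  assumes n: "n > 0" and T: "T > 0" and j: "j < n"
  shows "(\<Sum>k=1..n * T. \<delta> ^ (k - 1) * g (per_idx (n * T) (j * T + k)))
       = (\<Sum>b<n. \<Sum>r<T. \<delta> ^ r * (\<delta> ^ T) ^ cyc_diff n b j * g (b * T + r + 1))"
proof -
  have "j * T < n * T" using j T by simp
  then have "(\<Sum>k=1..n * T. \<delta> ^ (k - 1) * g (per_idx (n * T) (j * T + k)))
      = (\<Sum>z<n * T. \<delta> ^ cyc_diff (n * T) z (j * T) * g (z + 1))"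
    using sum_per_idx_shift[of "n * T" "j * T" "\<lambda>e x. \<delta> ^ e * g x"] n T by simp
  also have "\<dots> = (\<Sum>b<n. \<Sum>r<T. \<delta> ^ cyc_diff (n * T) (b * T + r) (j * T) * g (b * T + r + 1))"
    by (rule sum_lessThan_mult_blocks)
  also have "\<dots> = (\<Sum>b<n. \<Sum>r<T. \<delta> ^ r * (\<delta> ^ T) ^ cyc_diff n b j * g (b * T + r + 1))"
  proof (intro sum.cong refl)
    fix b r assume "r \<in> {..<T}"
    then have r: "r < T" by simp
    show "\<delta> ^ cyc_diff (n * T) (b * T + r) (j * T) * g (b * T + r + 1)
        = \<delta> ^ r * (\<delta> ^ T) ^ cyc_diff n b j * g (b * T + r + 1)"
      unfolding cyc_diff_mult_add[OF n T r] by (simp add: power_add power_mult[symmetric] mult_ac)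
  qed
  finally show ?thesis .
qed

lemma sum_power_blocks:
  fixes \<delta> :: "'a::comm_semiring_1"
  shows "(\<Sum>k=1..n * T. \<delta> ^ (k - 1)) = (\<Sum>r<T. \<delta> ^ r) * (\<Sum>b<n. (\<delta> ^ T) ^ b)"
proof -
  have "(\<Sum>k=1..n * T. \<delta> ^ (k - 1)) = (\<Sum>z<n * T. \<delta> ^ z)"
    by (simp add: sum.atLeast1_atMost_eq)
  also have "\<dots> = (\<Sum>b<n. \<Sum>r<T. \<delta> ^ (b * T + r))"
    by (rule sum_lessThan_mult_blocks)
  also have "\<dots> = (\<Sum>b<n. \<Sum>r<T. \<delta> ^ r * (\<delta> ^ T) ^ b)"
    by (simp add: power_add power_mult[symmetric] mult_ac)
  also have "\<dots> = (\<Sum>r<T. \<delta> ^ r) * (\<Sum>b<n. (\<delta> ^ T) ^ b)"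
    by (simp add: sum_product sum.swap[of _ "{..<n}"])
  finally show ?thesis .
qed

lemma sum_discount_pos: "(0::real) < \<delta> \<Longrightarrow> 0 < m \<Longrightarrow> 0 < (\<Sum>k=1..m. \<delta> ^ (k - 1))"
  by (intro sum_pos) auto

lemma weighted_mean_between:
  fixes w v :: "'i \<Rightarrow> real"
  assumes S: "sum w I > 0" and w: "\<And>k. k \<in> I \<Longrightarrow> 0 \<le> w k"
    and v: "\<And>k. k \<in> I \<Longrightarrow> lo \<le> v k \<and> v k \<le> hi"
  shows "lo \<le> 1 / sum w I * (\<Sum>k\<in>I. w k * v k) \<and> 1 / sum w I * (\<Sum>k\<in>I. w k * v k) \<le> hi"
proof -
  have "(\<Sum>k\<in>I. w k * v k) \<le> (\<Sum>k\<in>I. w k * hi)" using w v by (intro sum_mono mult_left_mono) auto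
  also have "\<dots> = sum w I * hi" by (rule sum_distrib_right[symmetric])
  finally have hi: "(\<Sum>k\<in>I. w k * v k) \<le> sum w I * hi" .
  have "sum w I * lo = (\<Sum>k\<in>I. w k * lo)" by (rule sum_distrib_right)
  also have "\<dots> \<le> (\<Sum>k\<in>I. w k * v k)" using w v by (intro sum_mono mult_left_mono) auto
  finally have lo: "sum w I * lo \<le> (\<Sum>k\<in>I. w k * v k)" .
  show ?thesis using hi lo S by (simp add: field_simps)
qed

section \<open>Support functions and maximisers\<close>

lemma subset_closed_convex_if_support_le:
  fixes A B :: "'a::{real_inner,heine_borel} set"
  assumes B: "convex B" "closed B"
    and support: "\<And>p. \<exists>y\<in>B. \<forall>x\<in>A. inner p x \<le> inner p y"
  shows "A \<subseteq> B"
proof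
  fix x assume x: "x \<in> A"
  show "x \<in> B"
  proof (rule ccontr)
    assume "x \<notin> B"
    then obtain q b where q: "inner q x < b" "\<forall>z\<in>B. b < inner q z"
      using separating_hyperplane_closed_point[OF B] by blast
    obtain y where "y \<in> B" "inner (-q) x \<le> inner (-q) y"
      using support x by blast
    then show False using q by force
  qed
qed

lemma finite_has_maximizer:
  fixes f :: "'a \<Rightarrow> 'b::linorder"
  assumes "finite S" "S \<noteq> {}"
  shows "\<exists>x\<in>S. \<forall>z\<in>S. f z \<le> f x"
proof -
  have "Max (f ` S) \<in> f ` S" using assms by (intro Max_in) auto
  then obtain x where x: "x \<in> S" "f x = Max (f ` S)" by auto
  then have "f z \<le> f x" if "z \<in> S" for z
    using that assms by simp
  then show ?thesis using x by blast
qed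

lemma maximizer_strict_if_unique:
  fixes f :: "'a \<Rightarrow> 'b::linorder"
  assumes unique: "\<exists>!x. x \<in> P \<and> (\<forall>z\<in>P. f z \<le> f x)"
    and x: "x \<in> P" "\<forall>z\<in>P. f z \<le> f x" and z: "z \<in> P" "z \<noteq> x"
  shows "f z < f x"
proof (rule ccontr)
  assume "\<not> f z < f x"
  then have "\<forall>w\<in>P. f w \<le> f z" using x(2) z(1) by force
  then show False using unique x z by blast
qed

lemma maximizer_constant_on_connected:
  fixes P :: "'a::real_inner set"
  assumes P: "finite P" and U: "connected U"
    and unique: "\<And>p. p \<in> U \<Longrightarrow> \<exists>!x. x \<in> P \<and> (\<forall>z\<in>P. inner p z \<le> inner p x)"
    and p0: "p0 \<in> U" and x0: "x0 \<in> P" "\<forall>z\<in>P. inner p0 z \<le> inner p0 x0"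
    and p: "p \<in> U"
  shows "\<forall>z\<in>P. inner p z \<le> inner p x0"
proof -
  define strict_max where "strict_max x = (\<Inter>z\<in>P - {x}. {p. inner p z < inner p x})" for x
  have "open (strict_max x)" for x
    unfolding strict_max_def using P by (intro open_INT ballI open_Collect_less continuous_intros) auto
  then have opens: "open (strict_max x0)" "open (\<Union>x\<in>P - {x0}. strict_max x)"
    by auto
  have strict: "q \<in> strict_max x" if "q \<in> U" "x \<in> P" "\<forall>z\<in>P. inner q z \<le> inner q x" for q x
    using maximizer_strict_if_unique[OF unique[OF that(1)] that(2,3)] unfolding strict_max_def by blast
  have cover: "U \<subseteq> strict_max x0 \<union> (\<Union>x\<in>P - {x0}. strict_max x)"
  proof
    fix q assume q: "q \<in> U"
    then obtain x where "x \<in> P" "\<forall>z\<in>P. inner q z \<le> inner q x"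
      using unique by blast
    with strict[OF q] show "q \<in> strict_max x0 \<union> (\<Union>x\<in>P - {x0}. strict_max x)"
      by (cases "x = x0") auto
  qed
  have "strict_max x0 \<inter> strict_max x = {}" if "x \<in> P - {x0}" for x
  proof -
    have "\<not> (inner q x < inner q x0 \<and> inner q x0 < inner q x)" for q :: 'a by simp
    then show ?thesis unfolding strict_max_def using that x0(1) by blast
  qed
  then have disjoint: "strict_max x0 \<inter> (\<Union>x\<in>P - {x0}. strict_max x) \<inter> U = {}"
    by blast
  have "strict_max x0 \<inter> U \<noteq> {}" using strict[OF p0 x0] p0 by blast
  then have "(\<Union>x\<in>P - {x0}. strict_max x) \<inter> U = {}"
    using connectedD[OF U opens disjoint cover] by blast
  then have "p \<in> strict_max x0" using cover p by blast
  then have "inner p z < inner p x0" if "z \<in> P" "z \<noteq> x0" for z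
    using that unfolding strict_max_def by blast
  then show ?thesis by (metis order.refl less_imp_le)
qed

lemma nonpos_if_add_mult_nonpos:
  fixes a b :: real
  assumes "\<And>e. e > 0 \<Longrightarrow> a + e * b \<le> 0"
  shows "a \<le> 0"
proof (rule tendsto_upperbound)
  show "((\<lambda>e. a + e * b) \<longlongrightarrow> a) (at_right 0)"
    by (auto intro!: tendsto_eq_intros)
  show "\<forall>\<^sub>F e in at_right 0. a + e * b \<le> 0"
    unfolding eventually_at_right_field using assms by (intro exI[of _ 1]) auto
qed simp

lemma corner_if_maximizer_on_orthant:
  fixes P :: "(real^'n) set" and \<sigma> :: "'n \<Rightarrow> real"
  assumes \<sigma>: "\<And>i. \<sigma> i \<noteq> 0"
    and max: "\<And>p. (\<forall>i. \<sigma> i * p$i > 0) \<Longrightarrow> \<forall>z\<in>P. inner p z \<le> inner p x0"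
  shows "\<forall>i. \<forall>y\<in>P. \<sigma> i * y$i \<le> \<sigma> i * x0$i"
proof (intro allI ballI)
  fix i y assume y: "y \<in> P"
  have sq: "\<sigma> j * \<sigma> j > 0" for j using \<sigma>[of j] not_real_square_gt_zero by blast
  define s :: "real^'n" where "s = (\<chi> j. \<sigma> j)"
  (* Directions inside the orthant that tend to the i-th axis direction. *)
  have "\<sigma> i * (y$i - x0$i) + e * inner s (y - x0) \<le> 0" if e: "e > 0" for e
  proof -
    define p :: "real^'n" where "p = axis i (\<sigma> i) + e *\<^sub>R s"
    have "\<sigma> j * p$j > 0" for j
    proof -
      have "e * (\<sigma> j * \<sigma> j) > 0" "(if j = i then \<sigma> j * \<sigma> j else 0) \<ge> 0"
        using sq[of j] e by simp_all
      moreover have "\<sigma> j * p$j = (if j = i then \<sigma> j * \<sigma> j else 0) + e * (\<sigma> j * \<sigma> j)"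
        by (simp add: p_def s_def axis_def algebra_simps)
      ultimately show ?thesis by linarith
    qed
    then have "inner p (y - x0) \<le> 0" using max y by (simp add: inner_diff_right)
    moreover have "inner p (y - x0) = \<sigma> i * (y$i - x0$i) + e * inner s (y - x0)"
      by (simp add: p_def inner_add_left inner_axis')
    ultimately show ?thesis by simp
  qed
  then have "\<sigma> i * (y$i - x0$i) \<le> 0" by (rule nonpos_if_add_mult_nonpos)
  then show "\<sigma> i * y$i \<le> \<sigma> i * x0$i" by (simp add: algebra_simps)
qed

lemma orthant_two_maximizers:
  fixes P :: "(real^'n) set" and \<sigma> :: "'n \<Rightarrow> real"
  assumes P: "finite P" "P \<noteq> {}" and \<sigma>: "\<And>i. \<sigma> i \<noteq> 0"
    and no_corner: "\<not> (\<exists>x\<in>P. \<forall>i. \<forall>y\<in>P. \<sigma> i * y$i \<le> \<sigma> i * x$i)"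
  shows "\<exists>p x y. (\<forall>i. \<sigma> i * p$i > 0) \<and> x \<in> P \<and> y \<in> P \<and> x \<noteq> y
    \<and> (\<forall>z\<in>P. inner p z \<le> inner p x) \<and> (\<forall>z\<in>P. inner p z \<le> inner p y)"
proof (rule ccontr)
  assume none: "\<not> ?thesis"
  define U where "U = {p :: real^'n. \<forall>i. \<sigma> i * p$i > 0}"
  have "U = (\<Inter>i. {p. inner (axis i (\<sigma> i)) p > 0})"
    unfolding U_def by (auto simp: inner_axis')
  then have "convex U" by (simp add: convex_INT convex_halfspace_gt)
  then have U: "connected U" by (rule convex_connected)
  have unique: "\<exists>!x. x \<in> P \<and> (\<forall>z\<in>P. inner p z \<le> inner p x)" if p: "p \<in> U" for p
  proof -
    obtain x where x: "x \<in> P" "\<forall>z\<in>P. inner p z \<le> inner p x"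
      using finite_has_maximizer[OF P] by blast
    moreover have "y = x" if "y \<in> P" "\<forall>z\<in>P. inner p z \<le> inner p y" for y
      using none[unfolded not_ex, rule_format, of p y x] that x p unfolding U_def by blast
    ultimately show ?thesis by blast
  qed
  define p0 :: "real^'n" where "p0 = (\<chi> j. \<sigma> j)"
  have "\<sigma> i * \<sigma> i > 0" for i using \<sigma>[of i] not_real_square_gt_zero by blast
  then have p0: "p0 \<in> U" unfolding U_def p0_def by simp
  obtain x0 where x0: "x0 \<in> P" "\<forall>z\<in>P. inner p0 z \<le> inner p0 x0"
    using finite_has_maximizer[OF P] by blast
  have x0_max: "\<forall>z\<in>P. inner p z \<le> inner p x0" if "\<forall>i. \<sigma> i * p$i > 0" for p
  proof -
    have "p \<in> U" using that unfolding U_def by simp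
    with P(1) U unique p0 x0 show ?thesis by (rule maximizer_constant_on_connected)
  qed
  have "\<forall>i. \<forall>y\<in>P. \<sigma> i * y$i \<le> \<sigma> i * x0$i"
    by (rule corner_if_maximizer_on_orthant[OF \<sigma> x0_max])
  then show False using no_corner x0(1) by blast
qed

section \<open>Feasible payoff sets of the repeated game\<close>

locale finite_game =
  fixes pos :: "'n::finite \<Rightarrow> nat" and Act :: "'n \<Rightarrow> 'a set"
    and u :: "'n \<Rightarrow> ('n \<Rightarrow> 'a) \<Rightarrow> real"
  assumes pos: "bij_betw pos UNIV {1..CARD('n)}"
    and finite_Act: "\<And>i. finite (Act i)"
    and Act_nonempty: "\<And>i. Act i \<noteq> {}"
begin

definition slot :: "'n \<Rightarrow> nat" where
  "slot i = pos i - 1"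

lemma slot_less: "slot i < CARD('n)"
  using bij_betw_apply[OF pos, of i] unfolding slot_def by auto

lemma inj_slot: "inj slot"
proof (rule injI)
  fix i j assume "slot i = slot j"
  moreover have "pos i \<ge> 1" "pos j \<ge> 1"
    using bij_betw_apply[OF pos] by auto
  ultimately have "pos i = pos j" unfolding slot_def by linarith
  then show "i = j" using bij_betw_imp_inj_on[OF pos] by (simp add: inj_eq)
qed

lemma finite_profiles: "finite (profiles Act)"
proof -
  have "finite (Pi\<^sub>E UNIV Act)" using finite_Act by (intro finite_PiE) auto
  then show ?thesis unfolding profiles_def PiE_UNIV_domain .
qed

lemma profiles_nonempty: "profiles Act \<noteq> {}"
  unfolding profiles_def using Act_nonempty by (simp add: Pi_eq_empty)

(* Value in direction p of playing profile a during the whole b-th block of T periods, D = delta^T. *)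
definition block_value :: "real \<Rightarrow> real^'n \<Rightarrow> nat \<Rightarrow> ('n \<Rightarrow> 'a) \<Rightarrow> real" where
  "block_value D p b a = (\<Sum>i\<in>UNIV. p$i * D ^ cyc_diff CARD('n) b (slot i) * u i a)"

definition block_max :: "real \<Rightarrow> real^'n \<Rightarrow> nat \<Rightarrow> real" where
  "block_max D p b = Max (block_value D p b ` profiles Act)"

(* For D = delta^T this is the support function of F(delta, T). *)
definition support :: "real \<Rightarrow> real^'n \<Rightarrow> real" where
  "support D p = (\<Sum>b<CARD('n). block_max D p b) / (\<Sum>b<CARD('n). D ^ b)"

lemma block_value_le_block_max: "a \<in> profiles Act \<Longrightarrow> block_value D p b a \<le> block_max D p b"
  unfolding block_max_def using finite_profiles by simp

lemma block_max_attained: "\<exists>a\<in>profiles Act. block_value D p b a = block_max D p b"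
proof -
  have "block_max D p b \<in> block_value D p b ` profiles Act"
    unfolding block_max_def using finite_profiles profiles_nonempty by (intro Max_in) auto
  then show ?thesis by auto
qed

lemma inner_Upay:
  assumes T: "T > 0"
  shows "inner p (Upay pos u \<delta> T s) = (1 / (\<Sum>k=1..CARD('n) * T. \<delta> ^ (k - 1))) *
     (\<Sum>b<CARD('n). \<Sum>r<T. \<delta> ^ r * block_value (\<delta> ^ T) p b (s (b * T + r + 1)))"
proof -
  let ?n = "CARD('n)" and ?D = "\<delta> ^ T"
  let ?c = "1 / (\<Sum>k=1..?n * T. \<delta> ^ (k - 1))"
  have "Upay pos u \<delta> T s $ i
      = ?c * (\<Sum>b<?n. \<Sum>r<T. \<delta> ^ r * ?D ^ cyc_diff ?n b (slot i) * u i (s (b * T + r + 1)))" for i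
    unfolding Upay_def vec_lambda_beta slot_def[symmetric]
    by (subst sum_per_idx_discounted[OF _ T slot_less]) simp_all
  then have "inner p (Upay pos u \<delta> T s)
      = (\<Sum>i\<in>UNIV. \<Sum>b<?n. \<Sum>r<T. ?c * (\<delta> ^ r * (p$i * ?D ^ cyc_diff ?n b (slot i) * u i (s (b * T + r + 1)))))"
    by (simp add: inner_vec_def sum_distrib_left mult_ac)
  also have "\<dots> = (\<Sum>b<?n. \<Sum>r<T. \<Sum>i\<in>UNIV. ?c * (\<delta> ^ r * (p$i * ?D ^ cyc_diff ?n b (slot i) * u i (s (b * T + r + 1)))))"
    by (subst sum.swap) (simp only: sum.swap[of _ UNIV])
  also have "\<dots> = ?c * (\<Sum>b<?n. \<Sum>r<T. \<delta> ^ r * block_value ?D p b (s (b * T + r + 1)))"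
    by (simp add: block_value_def sum_distrib_left)
  finally show ?thesis .
qed

lemma sum_power_pos: "(0::real) < D \<Longrightarrow> 0 < (\<Sum>b<CARD('n). D ^ b)"
  by (intro sum_pos) (auto simp: lessThan_empty_iff)

lemma support_eq_normalized_sum:
  assumes T: "T > 0" and \<delta>: "\<delta> > 0"
  shows "(1 / (\<Sum>k=1..CARD('n) * T. \<delta> ^ (k - 1))) * (\<Sum>b<CARD('n). \<Sum>r<T. \<delta> ^ r * block_max (\<delta> ^ T) p b)
     = support (\<delta> ^ T) p"
proof -
  have R: "(\<Sum>r<T. \<delta> ^ r) > 0" using T \<delta> by (intro sum_pos) auto
  have "(\<Sum>b<CARD('n). \<Sum>r<T. \<delta> ^ r * block_max (\<delta> ^ T) p b)
      = (\<Sum>r<T. \<delta> ^ r) * (\<Sum>b<CARD('n). block_max (\<delta> ^ T) p b)"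
    by (simp add: sum_distrib_left sum_distrib_right)
  then show ?thesis
    unfolding sum_power_blocks support_def using R sum_power_pos[of "\<delta> ^ T"] \<delta> by simp
qed

lemma inner_Upay_le_support:
  assumes T: "T > 0" and \<delta>: "\<delta> > 0" and s: "\<forall>k\<in>{1..CARD('n) * T}. s k \<in> profiles Act"
  shows "inner p (Upay pos u \<delta> T s) \<le> support (\<delta> ^ T) p"
proof -
  have "b * T + r + 1 \<in> {1..CARD('n) * T}" if "b < CARD('n)" "r < T" for b r
  proof -
    have "b * T + r + 1 \<le> Suc b * T" using that by simp
    also have "\<dots> \<le> CARD('n) * T" using that by (intro mult_le_mono1) simp
    finally show ?thesis by simp
  qed
  then have "(\<Sum>b<CARD('n). \<Sum>r<T. \<delta> ^ r * block_value (\<delta> ^ T) p b (s (b * T + r + 1)))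
      \<le> (\<Sum>b<CARD('n). \<Sum>r<T. \<delta> ^ r * block_max (\<delta> ^ T) p b)"
    using s \<delta> by (intro sum_mono mult_left_mono block_value_le_block_max) auto
  moreover have "(\<Sum>k=1..CARD('n) * T. \<delta> ^ (k - 1)) > 0"
    using T \<delta> by (intro sum_discount_pos) auto
  ultimately show ?thesis
    unfolding inner_Upay[OF T] support_eq_normalized_sum[OF T \<delta>, symmetric]
    by (intro mult_left_mono) auto
qed

lemma inner_Upay_attains_support:
  assumes T: "T > 0" and \<delta>: "\<delta> > 0"
  obtains s where "\<forall>k. s k \<in> profiles Act" "inner p (Upay pos u \<delta> T s) = support (\<delta> ^ T) p"
proof -
  obtain a where a: "\<And>b. a b \<in> profiles Act \<and> block_value (\<delta> ^ T) p b (a b) = block_max (\<delta> ^ T) p b"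
    using block_max_attained by metis
  define s where "s k = a ((k - 1) div T)" for k
  have "s (b * T + r + 1) = a b" if "r < T" for b r
    unfolding s_def using that by simp
  then have "inner p (Upay pos u \<delta> T s)
      = (1 / (\<Sum>k=1..CARD('n) * T. \<delta> ^ (k - 1))) * (\<Sum>b<CARD('n). \<Sum>r<T. \<delta> ^ r * block_max (\<delta> ^ T) p b)"
    unfolding inner_Upay[OF T] using a by simp
  then show ?thesis
    using that[of s] a unfolding support_eq_normalized_sum[OF T \<delta>] s_def by blast
qed

lemma Upay_restrict:
  assumes "T > 0"
  shows "Upay pos u \<delta> T (restrict s {1..CARD('n) * T}) = Upay pos u \<delta> T s"
proof -
  have "per_idx (CARD('n) * T) k \<in> {1..CARD('n) * T}" for k
    unfolding per_idx_def using assms by (auto simp: Suc_leI)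
  then show ?thesis unfolding Upay_def by simp
qed

lemma closed_Fset:
  assumes T: "T > 0"
  shows "closed (Fset pos Act u \<delta> T)"
proof -
  let ?I = "{1..CARD('n) * T}"
  have "{Upay pos u \<delta> T s | s. \<forall>k\<in>?I. s k \<in> profiles Act}
      \<subseteq> Upay pos u \<delta> T ` (Pi\<^sub>E ?I (\<lambda>_. profiles Act))"
    using Upay_restrict[OF T] by (auto intro!: image_eqI[of _ _ "restrict s ?I" for s])
  moreover have "finite (Pi\<^sub>E ?I (\<lambda>_. profiles Act))"
    using finite_profiles by (intro finite_PiE) auto
  ultimately have "finite {Upay pos u \<delta> T s | s. \<forall>k\<in>?I. s k \<in> profiles Act}"
    by (meson finite_imageI finite_subset)
  then show ?thesis
    unfolding Fset_def by (intro compact_imp_closed finite_imp_compact_convex_hull)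
qed

lemma Fset_inner_le_support:
  assumes T: "T > 0" and \<delta>: "\<delta> > 0" and x: "x \<in> Fset pos Act u \<delta> T"
  shows "inner p x \<le> support (\<delta> ^ T) p"
proof -
  have "Fset pos Act u \<delta> T \<subseteq> {x. inner p x \<le> support (\<delta> ^ T) p}"
    unfolding Fset_def
    by (rule hull_minimal) (auto intro: inner_Upay_le_support[OF T \<delta>] simp: convex_halfspace_le)
  then show ?thesis using x by auto
qed

lemma Fset_attains_support:
  assumes T: "T > 0" and \<delta>: "\<delta> > 0"
  shows "\<exists>y\<in>Fset pos Act u \<delta> T. inner p y = support (\<delta> ^ T) p"
proof -
  obtain s where s: "\<forall>k. s k \<in> profiles Act" "inner p (Upay pos u \<delta> T s) = support (\<delta> ^ T) p"
    using inner_Upay_attains_support[OF T \<delta>] .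
  then have "Upay pos u \<delta> T s \<in> Fset pos Act u \<delta> T"
    unfolding Fset_def by (intro hull_inc) blast
  then show ?thesis using s(2) by blast
qed

lemma block_value_convolution:
  assumes b: "b < CARD('n)"
  shows "(1 - D ^ CARD('n)) * block_value D' p b a
     = (\<Sum>k<CARD('n). circ_weight CARD('n) D D' k * block_value D p (cyc_diff CARD('n) b k) a)"
proof -
  let ?n = "CARD('n)" and ?w = "circ_weight CARD('n) D D'"
  have n: "?n > 0" by simp
  have "(\<Sum>k<?n. ?w k * block_value D p (cyc_diff ?n b k) a)
      = (\<Sum>k<?n. \<Sum>i\<in>UNIV. ?w k * (p$i * D ^ cyc_diff ?n (cyc_diff ?n b k) (slot i) * u i a))"
    by (simp only: block_value_def sum_distrib_left)
  also have "\<dots> = (\<Sum>i\<in>UNIV. \<Sum>k<?n. ?w k * (p$i * D ^ cyc_diff ?n (cyc_diff ?n b k) (slot i) * u i a))"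
    by (rule sum.swap)
  also have "\<dots> = (\<Sum>i\<in>UNIV. p$i * u i a * (\<Sum>k<?n. ?w k * D ^ cyc_diff ?n (cyc_diff ?n b (slot i)) k))"
  proof (rule sum.cong[OF refl])
    fix i
    show "(\<Sum>k<?n. ?w k * (p$i * D ^ cyc_diff ?n (cyc_diff ?n b k) (slot i) * u i a))
        = p$i * u i a * (\<Sum>k<?n. ?w k * D ^ cyc_diff ?n (cyc_diff ?n b (slot i)) k)"
      unfolding cyc_diff_right_commute[OF n, of b _ "slot i"] sum_distrib_left
      by (simp only: mult.assoc mult.commute mult.left_commute)
  qed
  also have "\<dots> = (\<Sum>i\<in>UNIV. p$i * u i a * ((1 - D ^ ?n) * D' ^ cyc_diff ?n b (slot i)))"
    by (simp only: circ_weight_convolution[OF n cyc_diff_less[OF n]])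
  also have "\<dots> = (1 - D ^ ?n) * block_value D' p b a"
    unfolding block_value_def sum_distrib_left
    by (simp only: mult.assoc mult.commute mult.left_commute)
  finally show ?thesis by simp
qed

definition convolution_gap :: "real \<Rightarrow> real \<Rightarrow> real^'n \<Rightarrow> nat \<Rightarrow> real" where
  "convolution_gap D D' p b =
     (\<Sum>k<CARD('n). circ_weight CARD('n) D D' k * block_max D p (cyc_diff CARD('n) b k))
     - (1 - D ^ CARD('n)) * block_max D' p b"

lemma convolution_gap_nonneg:
  assumes D: "0 < D" "D < D'" "D' \<le> 1" and b: "b < CARD('n)"
  shows "convolution_gap D D' p b \<ge> 0"
proof -
  obtain a where a: "a \<in> profiles Act" "block_value D' p b a = block_max D' p b"
    using block_max_attained by blast
  have "(1 - D ^ CARD('n)) * block_max D' p b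
      = (\<Sum>k<CARD('n). circ_weight CARD('n) D D' k * block_value D p (cyc_diff CARD('n) b k) a)"
    unfolding a(2)[symmetric] by (rule block_value_convolution[OF b])
  also have "\<dots> \<le> (\<Sum>k<CARD('n). circ_weight CARD('n) D D' k * block_max D p (cyc_diff CARD('n) b k))"
    using less_imp_le[OF circ_weight_pos[OF D]]
    by (intro sum_mono mult_left_mono block_value_le_block_max a(1)) auto
  finally show ?thesis unfolding convolution_gap_def by simp
qed

lemma sum_convolution_gap:
  "(\<Sum>b<CARD('n). convolution_gap D D' p b)
     = (1 - D) * ((\<Sum>b<CARD('n). D' ^ b) * (\<Sum>b<CARD('n). block_max D p b)
                  - (\<Sum>b<CARD('n). D ^ b) * (\<Sum>b<CARD('n). block_max D' p b))"
proof -
  have "(\<Sum>b<CARD('n). convolution_gap D D' p b)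
      = (\<Sum>k<CARD('n). circ_weight CARD('n) D D' k) * (\<Sum>b<CARD('n). block_max D p b)
        - (1 - D ^ CARD('n)) * (\<Sum>b<CARD('n). block_max D' p b)"
    unfolding convolution_gap_def sum_subtractf sum_distrib_left[symmetric]
    by (simp only: sum_cyc_diff_convolution[OF zero_less_card_finite])
  then show ?thesis
    unfolding sum_circ_weight[OF zero_less_card_finite] one_diff_power_eq
    by (simp add: algebra_simps)
qed

lemma support_antimono:
  assumes D: "0 < D" "D < D'" "D' \<le> 1"
  shows "support D' p \<le> support D p"
proof -
  have "0 \<le> (\<Sum>b<CARD('n). convolution_gap D D' p b)"
    using convolution_gap_nonneg[OF D] by (intro sum_nonneg) auto
  then have "(\<Sum>b<CARD('n). D ^ b) * (\<Sum>b<CARD('n). block_max D' p b)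
      \<le> (\<Sum>b<CARD('n). D' ^ b) * (\<Sum>b<CARD('n). block_max D p b)"
    unfolding sum_convolution_gap using D by (simp add: zero_le_mult_iff)
  then show ?thesis
    unfolding support_def using sum_power_pos[of D] sum_power_pos[of D'] D
    by (simp add: field_simps)
qed

lemma convolution_gap_eq_0_if_support_eq:
  assumes D: "0 < D" "D < D'" "D' \<le> 1" and eq: "support D' p = support D p"
    and b: "b < CARD('n)"
  shows "convolution_gap D D' p b = 0"
proof -
  have "(\<Sum>b<CARD('n). D ^ b) * (\<Sum>b<CARD('n). block_max D' p b)
      = (\<Sum>b<CARD('n). D' ^ b) * (\<Sum>b<CARD('n). block_max D p b)"
    using eq sum_power_pos[of D] sum_power_pos[of D'] D
    unfolding support_def by (simp add: field_simps)
  then have "(\<Sum>b<CARD('n). convolution_gap D D' p b) = 0"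
    unfolding sum_convolution_gap by simp
  then show ?thesis
    using convolution_gap_nonneg[OF D] b by (subst (asm) sum_nonneg_eq_0_iff) auto
qed

lemma common_block_maximizer_if_support_eq:
  assumes D: "0 < D" "D < D'" "D' \<le> 1" and eq: "support D' p = support D p"
  obtains a where "a \<in> profiles Act" "\<And>c. c < CARD('n) \<Longrightarrow> block_value D p c a = block_max D p c"
proof -
  let ?n = "CARD('n)" and ?w = "circ_weight CARD('n) D D'"
  have n: "?n > 0" by simp
  obtain a where a: "a \<in> profiles Act" "block_value D' p 0 a = block_max D' p 0"
    using block_max_attained by blast
  have sum_eq: "(\<Sum>k<?n. ?w k * block_value D p (cyc_diff ?n 0 k) a)
      = (\<Sum>k<?n. ?w k * block_max D p (cyc_diff ?n 0 k))"
    using convolution_gap_eq_0_if_support_eq[OF D eq n] block_value_convolution[OF n, of D D' p a]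
    unfolding convolution_gap_def a(2) by simp
  have le: "?w k * block_value D p (cyc_diff ?n 0 k) a \<le> ?w k * block_max D p (cyc_diff ?n 0 k)"
    if "k \<in> {..<?n}" for k
    using that by (intro mult_left_mono block_value_le_block_max[OF a(1)] less_imp_le[OF circ_weight_pos[OF D]]) simp
  have weighted_eq: "?w k * block_value D p (cyc_diff ?n 0 k) a = ?w k * block_max D p (cyc_diff ?n 0 k)"
    if "k < ?n" for k
    by (rule sum_mono_inv[OF sum_eq le]) (use that in simp_all)
  have max: "block_value D p (cyc_diff ?n 0 k) a = block_max D p (cyc_diff ?n 0 k)" if "k < ?n" for k
  proof -
    have "?w k \<noteq> 0" using circ_weight_pos[OF D that] by simp
    then show ?thesis using weighted_eq[OF that] by simp
  qed
  show ?thesis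
  proof (rule that[OF a(1)])
    fix c assume "c < ?n"
    then show "block_value D p c a = block_max D p c"
      using max[OF cyc_diff_less[OF n]] cyc_diff_0_left_involutive by metis
  qed
qed

lemma sum_block_value: "(\<Sum>c<CARD('n). block_value D p c a) = (\<Sum>c<CARD('n). D ^ c) * inner p (uvec u a)"
proof -
  have "(\<Sum>c<CARD('n). block_value D p c a)
      = (\<Sum>i\<in>UNIV. p$i * u i a * (\<Sum>c<CARD('n). D ^ cyc_diff CARD('n) c (slot i)))"
    unfolding block_value_def sum_distrib_left
    by (subst sum.swap) (simp only: mult.assoc mult.commute mult.left_commute)
  also have "\<dots> = (\<Sum>c<CARD('n). D ^ c) * inner p (uvec u a)"
    unfolding sum_cyc_diff_reindex[OF zero_less_card_finite]
    by (simp add: inner_vec_def uvec_def sum_distrib_left mult_ac)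
  finally show ?thesis .
qed

lemma block_values_eq_if_common_maximizer:
  assumes D: "D > 0"
    and a: "a \<in> profiles Act" "\<And>c. c < CARD('n) \<Longrightarrow> block_value D p c a = block_max D p c"
    and a': "a' \<in> profiles Act" "\<And>b. b \<in> profiles Act \<Longrightarrow> inner p (uvec u b) \<le> inner p (uvec u a')"
    and c: "c < CARD('n)"
  shows "block_value D p c a' = block_value D p c a"
proof -
  have le: "block_value D p c a' \<le> block_value D p c a" if "c \<in> {..<CARD('n)}" for c
    using block_value_le_block_max[OF a'(1)] a(2) that by simp
  have "(\<Sum>c<CARD('n). block_value D p c a) \<le> (\<Sum>c<CARD('n). block_value D p c a')"
    unfolding sum_block_value using sum_power_pos[OF D] a'(2)[OF a(1)] by simp
  moreover have "(\<Sum>c<CARD('n). block_value D p c a') \<le> (\<Sum>c<CARD('n). block_value D p c a)"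
    using le by (rule sum_mono)
  ultimately have "(\<Sum>c<CARD('n). block_value D p c a') = (\<Sum>c<CARD('n). block_value D p c a)"
    by (rule antisym[rotated])
  then show ?thesis by (rule sum_mono_inv[OF _ le]) (use c in simp_all)
qed

lemma uvec_eq_if_block_values_eq:
  assumes D: "0 < D" "D < 1" and p: "\<And>i. p$i \<noteq> 0"
    and eq: "\<And>c. c < CARD('n) \<Longrightarrow> block_value D p c a1 = block_value D p c a2"
  shows "uvec u a1 = uvec u a2"
proof -
  have D_pow: "D ^ CARD('n) < 1" using D by (simp add: power_less_one_iff)
  have "p$i * (u i a1 - u i a2) = 0" for i
  proof (rule circulant_kernel_trivial[where idx = slot and I = UNIV and n = "CARD('n)"])
    fix c assume "c < CARD('n)"
    then show "(\<Sum>i\<in>UNIV. p$i * (u i a1 - u i a2) * D ^ cyc_diff CARD('n) c (slot i)) = 0"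
      using eq unfolding block_value_def by (simp add: sum_subtractf algebra_simps)
  qed (use D_pow in \<open>auto simp: inj_slot slot_less\<close>)
  then show ?thesis using p unfolding uvec_def by (simp add: vec_eq_iff)
qed

lemma support_strict_antimono:
  assumes D: "0 < D" "D < D'" "D' \<le> 1" and p: "\<And>i. p$i \<noteq> 0"
    and a1: "a1 \<in> profiles Act" "\<And>b. b \<in> profiles Act \<Longrightarrow> inner p (uvec u b) \<le> inner p (uvec u a1)"
    and a2: "a2 \<in> profiles Act" "\<And>b. b \<in> profiles Act \<Longrightarrow> inner p (uvec u b) \<le> inner p (uvec u a2)"
    and ne: "uvec u a1 \<noteq> uvec u a2"
  shows "support D' p < support D p"
proof (rule ccontr)
  assume "\<not> ?thesis"
  then have "support D' p = support D p" using support_antimono[OF D, of p] by simp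
  then obtain a where a: "a \<in> profiles Act" "\<And>c. c < CARD('n) \<Longrightarrow> block_value D p c a = block_max D p c"
    using common_block_maximizer_if_support_eq[OF D] by blast
  have "block_value D p c a1 = block_value D p c a2" if "c < CARD('n)" for c
    using block_values_eq_if_common_maximizer[OF D(1) a a1 that]
      block_values_eq_if_common_maximizer[OF D(1) a a2 that] by simp
  then have "uvec u a1 = uvec u a2"
    using D p by (intro uvec_eq_if_block_values_eq[of D]) auto
  then show False using ne by simp
qed

lemma convex_Fstar: "convex (Fstar Act u)"
proof -
  have "Fstar Act u = cbox (\<chi> i. Min (u i ` profiles Act)) (\<chi> i. Max (u i ` profiles Act))"
    unfolding Fstar_def by (simp add: set_eq_iff mem_box_cart)
  then show ?thesis by (simp add: convex_box)
qed

lemma Vset_subset_Fstar: "Vset Act u \<subseteq> Fstar Act u"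
  unfolding Vset_def
  by (rule hull_minimal) (use convex_Fstar in \<open>auto simp: Fstar_def uvec_def finite_profiles\<close>)

lemma Upay_in_Fstar:
  assumes T: "T > 0" and \<delta>: "\<delta> > 0" and s: "\<forall>k\<in>{1..CARD('n) * T}. s k \<in> profiles Act"
  shows "Upay pos u \<delta> T s \<in> Fstar Act u"
proof -
  have S: "(\<Sum>k=1..CARD('n) * T. \<delta> ^ (k - 1)) > 0"
    using T \<delta> by (intro sum_discount_pos) auto
  have "per_idx (CARD('n) * T) k \<in> {1..CARD('n) * T}" for k
    unfolding per_idx_def using T by (auto simp: Suc_leI)
  then have bounds: "Min (u i ` profiles Act) \<le> u i (s (per_idx (CARD('n) * T) k)) \<and>
      u i (s (per_idx (CARD('n) * T) k)) \<le> Max (u i ` profiles Act)" for i k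
    using s finite_profiles by auto
  show ?thesis
    unfolding Fstar_def Upay_def vec_lambda_beta mem_Collect_eq
    by (intro allI weighted_mean_between[OF S]) (use bounds \<delta> in auto)
qed

lemma Fset_subset_Fstar:
  assumes "T > 0" "\<delta> > 0"
  shows "Fset pos Act u \<delta> T \<subseteq> Fstar Act u"
  unfolding Fset_def
  by (rule hull_minimal) (use Upay_in_Fstar[OF assms] convex_Fstar in auto)

lemma Upay_const:
  assumes T: "T > 0" and \<delta>: "\<delta> > 0"
  shows "Upay pos u \<delta> T (\<lambda>_. a) = uvec u a"
proof -
  have "(\<Sum>k=1..CARD('n) * T. \<delta> ^ (k - 1)) > 0"
    using T \<delta> by (intro sum_discount_pos) auto
  then show ?thesis unfolding uvec_def Upay_def by (simp add: vec_eq_iff flip: sum_distrib_right)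
qed

lemma Vset_subset_Fset:
  assumes "T > 0" "\<delta> > 0"
  shows "Vset Act u \<subseteq> Fset pos Act u \<delta> T"
  unfolding Vset_def Fset_def
proof (rule hull_mono, rule image_subsetI)
  fix a assume "a \<in> profiles Act"
  then show "uvec u a \<in> {Upay pos u \<delta> T s |s. \<forall>k\<in>{1..CARD('n) * T}. s k \<in> profiles Act}"
    using Upay_const[OF assms, of a] by force
qed

lemma Fstar_subset_Vset_if_corners:
  assumes corners: "\<And>\<sigma>. (\<forall>i. \<sigma> i = 1 \<or> \<sigma> i = -1) \<Longrightarrow>
    \<exists>x\<in>uvec u ` profiles Act. \<forall>i. \<forall>y\<in>uvec u ` profiles Act. \<sigma> i * y$i \<le> \<sigma> i * x$i"
  shows "Fstar Act u \<subseteq> Vset Act u"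
proof (rule subset_closed_convex_if_support_le)
  show "convex (Vset Act u)" unfolding Vset_def by (rule convex_convex_hull)
  show "closed (Vset Act u)"
    unfolding Vset_def using finite_profiles
    by (intro compact_imp_closed finite_imp_compact_convex_hull finite_imageI)
  fix p :: "real^'n"
  define \<sigma> where "\<sigma> i = (if p$i \<ge> 0 then 1 else -1 :: real)" for i
  have "\<forall>i. \<sigma> i = 1 \<or> \<sigma> i = -1" unfolding \<sigma>_def by simp
  then obtain x where x: "x \<in> uvec u ` profiles Act"
    and x_corner: "\<forall>i. \<forall>y\<in>uvec u ` profiles Act. \<sigma> i * y$i \<le> \<sigma> i * x$i"
    using corners by blast
  then obtain a where a: "a \<in> profiles Act" "x = uvec u a" by blast
  have corner: "\<sigma> i * u i b \<le> \<sigma> i * u i a" if "b \<in> profiles Act" for i b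
    using x_corner that unfolding a(2) uvec_def by simp
  have "p$i * y$i \<le> p$i * u i a" if "y \<in> Fstar Act u" for i y
  proof (cases "p$i \<ge> 0")
    case True
    then have "Max (u i ` profiles Act) \<le> u i a"
      using corner[of _ i] finite_profiles profiles_nonempty by (auto simp: \<sigma>_def)
    moreover have "y$i \<le> Max (u i ` profiles Act)" using that unfolding Fstar_def by simp
    ultimately show ?thesis using True by (intro mult_left_mono) auto
  next
    case False
    then have "u i a \<le> Min (u i ` profiles Act)"
      using corner[of _ i] finite_profiles profiles_nonempty by (auto simp: \<sigma>_def)
    moreover have "Min (u i ` profiles Act) \<le> y$i" using that unfolding Fstar_def by simp
    ultimately show ?thesis using False by (intro mult_left_mono_neg) auto
  qed
  then have "inner p y \<le> inner p (uvec u a)" if "y \<in> Fstar Act u" for y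
    using that unfolding inner_vec_def uvec_def by (auto intro: sum_mono)
  moreover have "uvec u a \<in> Vset Act u" unfolding Vset_def using a(1) by (intro hull_inc imageI)
  ultimately show "\<exists>x\<in>Vset Act u. \<forall>y\<in>Fstar Act u. inner p y \<le> inner p x" by blast
qed

lemma Fset_eq_Vset_if_Vset_eq_Fstar:
  assumes "Vset Act u = Fstar Act u" "T > 0" "\<delta> > 0"
  shows "Fset pos Act u \<delta> T = Vset Act u"
  using Fset_subset_Fstar[OF assms(2,3)] Vset_subset_Fset[OF assms(2,3)] assms(1) by blast

lemma Fset_subset_Fset:
  assumes T: "T > 0" "T' > 0" and \<delta>: "\<delta> > 0" "\<delta>' > 0"
    and D: "\<delta> ^ T < \<delta>' ^ T'" "\<delta>' ^ T' \<le> 1"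
  shows "Fset pos Act u \<delta>' T' \<subseteq> Fset pos Act u \<delta> T"
proof (rule subset_closed_convex_if_support_le)
  show "convex (Fset pos Act u \<delta> T)" unfolding Fset_def by (rule convex_convex_hull)
  show "closed (Fset pos Act u \<delta> T)" by (rule closed_Fset[OF T(1)])
  fix p :: "real^'n"
  obtain y where y: "y \<in> Fset pos Act u \<delta> T" "inner p y = support (\<delta> ^ T) p"
    using Fset_attains_support[OF T(1) \<delta>(1)] by blast
  have "inner p x \<le> inner p y" if "x \<in> Fset pos Act u \<delta>' T'" for x
    unfolding y(2) using Fset_inner_le_support[OF T(2) \<delta>(2) that] support_antimono[of "\<delta> ^ T"] \<delta> D
    by (meson order_trans zero_less_power)
  with y(1) show "\<exists>y\<in>Fset pos Act u \<delta> T. \<forall>x\<in>Fset pos Act u \<delta>' T'. inner p x \<le> inner p y"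
    by blast
qed

lemma ex_support_gap_if_Vset_ne_Fstar:
  assumes VF: "Vset Act u \<noteq> Fstar Act u" and D: "0 < D" "D < D'" "D' \<le> 1"
  shows "\<exists>p. support D' p < support D p"
proof -
  let ?P = "uvec u ` profiles Act"
  have "\<not> Fstar Act u \<subseteq> Vset Act u" using VF Vset_subset_Fstar by blast
  then obtain \<sigma> where \<sigma>: "\<forall>i. \<sigma> i = 1 \<or> \<sigma> i = -1"
    and no_corner: "\<not> (\<exists>x\<in>?P. \<forall>i. \<forall>y\<in>?P. \<sigma> i * y$i \<le> \<sigma> i * x$i)"
    using Fstar_subset_Vset_if_corners by blast
  have "\<sigma> i \<noteq> 0" for i using \<sigma> by (metis zero_neq_neg_one zero_neq_one)
  then obtain p x y where p: "\<forall>i. \<sigma> i * p$i > 0" and "x \<in> ?P" "y \<in> ?P" "x \<noteq> y"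
    and "\<forall>z\<in>?P. inner p z \<le> inner p x" "\<forall>z\<in>?P. inner p z \<le> inner p y"
    using orthant_two_maximizers[of ?P \<sigma>] finite_profiles profiles_nonempty no_corner by blast
  then obtain a1 a2
    where a1: "a1 \<in> profiles Act" "\<And>b. b \<in> profiles Act \<Longrightarrow> inner p (uvec u b) \<le> inner p (uvec u a1)"
      and a2: "a2 \<in> profiles Act" "\<And>b. b \<in> profiles Act \<Longrightarrow> inner p (uvec u b) \<le> inner p (uvec u a2)"
      and ne: "uvec u a1 \<noteq> uvec u a2"
    by auto
  have "p$i \<noteq> 0" for i using p by (metis mult_zero_right order_less_irrefl)
  then have "support D' p < support D p"
    by (rule support_strict_antimono[OF D _ a1 a2 ne])
  then show ?thesis ..
qed

lemma Fset_psubset_if_Vset_ne_Fstar: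
  assumes VF: "Vset Act u \<noteq> Fstar Act u"
    and T: "T > 0" "T' > 0" and \<delta>: "\<delta> > 0" "\<delta>' > 0" "\<delta>' \<le> 1" and less: "\<delta> ^ T < \<delta>' ^ T'"
  shows "Fset pos Act u \<delta>' T' \<subset> Fset pos Act u \<delta> T"
proof -
  have D: "0 < \<delta> ^ T" "\<delta> ^ T < \<delta>' ^ T'" "\<delta>' ^ T' \<le> 1"
    using \<delta> less by (simp_all add: power_le_one)
  obtain p where gap: "support (\<delta>' ^ T') p < support (\<delta> ^ T) p"
    using ex_support_gap_if_Vset_ne_Fstar[OF VF D] by blast
  obtain y where y: "y \<in> Fset pos Act u \<delta> T" "inner p y = support (\<delta> ^ T) p"
    using Fset_attains_support[OF T(1) \<delta>(1)] by blast
  have "y \<notin> Fset pos Act u \<delta>' T'"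
    using Fset_inner_le_support[OF T(2) \<delta>(2), of y p] gap y(2) by linarith
  then show ?thesis using Fset_subset_Fset[OF T \<delta>(1,2) D(2,3)] y(1) by blast
qed

end

theorem proposition1:
  fixes pos :: "'n::finite \<Rightarrow> nat"
    and Act :: "'n \<Rightarrow> 'a set"
    and u :: "'n \<Rightarrow> ('n \<Rightarrow> 'a) \<Rightarrow> real"
  assumes n2: "CARD('n) \<ge> 2"
    and pos: "bij_betw pos UNIV {1..CARD('n)}"
    and fin: "\<And>i. finite (Act i)"
    and ne: "\<And>i. Act i \<noteq> {}"
  shows "(Vset Act u \<noteq> Fstar Act u \<longrightarrow>
            (\<forall>\<delta> \<delta>' T T'. \<delta> \<in> {0<..1} \<and> \<delta>' \<in> {0<..1} \<and> T \<ge> 1 \<and> T' \<ge> 1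
                \<and> \<delta> ^ T < \<delta>' ^ T' \<longrightarrow> Fset pos Act u \<delta>' T' \<subset> Fset pos Act u \<delta> T))
       \<and> (Vset Act u = Fstar Act u \<longrightarrow>
            (\<forall>\<delta> T. \<delta> \<in> {0<..1} \<and> T \<ge> 1 \<longrightarrow> Fset pos Act u \<delta> T = Vset Act u))"
proof -
  interpret finite_game pos Act u
    using pos fin ne by unfold_locales
  show ?thesis
    using Fset_psubset_if_Vset_ne_Fstar Fset_eq_Vset_if_Vset_eq_Fstar by auto
qed

end
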